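(* Let $\psi\in\mathcal L$ be well-formed, let $\tau$ be a trace, and let $\sigma=\mathsf{seq}_\psi(\tau)$. Then $\psi^+(\sigma)\equiv\top$ if and only if $\tau\models\psi$.
   Context: Syntax. Fix a multi-sorted signature $\Sigma=\langle\mathcal S,\mathcal P,\mathcal F,V\rangle$ with a finite non-empty set $V$ of sorted data variables. Each $v\in V$ has a lookback variable $\overleftarrow v$, and $\overleftarrow V=\{\overleftarrow v\mid v\in V\}$. Terms are $t::=v\mid\overleftarrow v\mid f(t_1,\dots,t_k)$; atoms are $p(t_1,\dots,t_k)$. First-order formulas are $\phi::=\top\mid\bot\mid a\mid\neg a\mid\phi\wedge\phi\mid\phi\vee\phi$. Properties are $\psi::=\phi\mid\psi\wedge\psi\mid\psi\vee\psi\mid\mathsf X\psi\mid\mathsf X_{\mathsf w}\psi\mid\psi\mathsf U\psi\mid\psi\mathsf R\psi$, forming the set $\mathcal L$; $\mathit{foa}(\psi)$ is the set of atoms of $\psi$. Semantics. A trace is $\tau=(M,\langle\alpha_0,\dots,\alpha_{n-1}\rangle)$ with $M$ a $\Sigma$-structure and $\alpha_i$ assignments on $V$. A term is well-defined at $i$ if $0<i<n$, or $i=0$ and it has no lookback variable. $v$ evaluates to $\alpha_i(v)$ and $\overleftarrow v$ to $\alpha_{i-1}(v)$. - $\tau,i\models p(t_1,\dots,t_k)$ iff some $t_j$ is not well-defined at $i$, or the evaluated tuple is in $p^M$; $\tau,i\models\neg a$ iff $\tau,i\not\models a$. - $\wedge$ and $\vee$ are as usual. - $\mathsf X\psi$: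 $i<n-1$ and $\psi$ holds at $i+1$. - $\mathsf X_{\mathsf w}\psi$: $i=n-1$ or $\psi$ holds at $i+1$. - $\psi_1\mathsf U\psi_2$: some $j\in[i,n)$ has $\psi_2$, with $\psi_1$ on $[i,j)$. - $\psi_1\mathsf R\psi_2$: $\psi_2$ holds on $[i,n)$, or some $j\in[i,n)$ has $\psi_1$ with $\psi_2$ on $[i,j]$. $\tau\models\psi$ iff $\tau,0\models\psi$. For assignments $\alpha,\alpha'$ on $V$, $\alpha\rhd\alpha'$ maps $\overleftarrow v\mapsto\alpha(v)$ and $v\mapsto\alpha'(v)$. Normal forms. - $\mathit{last}$ is a dedicated proposition meant to hold only at the last instant. - $\mathsf{tnps}(\psi)=\{\psi\}$ if $\psi$ is a (negated) atom or rooted by a temporal operator, and $\mathsf{tnps}(\psi_1\wedge\psi_2)=\mathsf{tnps}(\psi_1\vee\psi_2)=\mathsf{tnps}(\psi_1)\cup\mathsf{tnps}(\psi_2)$. - $\mathsf{xnf}$ fixes literals, $\top$, $\bot$ and $\mathsf X$/$\mathsf X_{\mathsf w}$-rooted properties, commutes with $\wedge$ and $\vee$, and satisfies $\mathsf{xnf}(\psi_1\mathsf U\psi_2)=\mathsf{xnf}(\psi_2)\vee(\mathsf{xnf}(\psi_1)\wedge\mathsf X(\psi_1\mathsf U\psi_2))$ and $\mathsf{xnf}(\psi_1\mathsf R\psi_2)=(\mathsf{xnf}(\psi_2)\vee\mathit{last})\wedge(\mathsf{xnf}(\psi_1)\vee\mathsf X_{\mathsf w}(\psi_1\mathsf R\psi_2))$.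 - $\psi$ is well-formed if no (negated) atom in $\mathsf{tnps}(\mathsf{xnf}(\psi))$ contains a lookback variable. Progression. For a set of atoms $A$, $\psi^+(A)$ is defined by: - an atom $a$ maps to $\top$ if $a\in A$ and to $\bot$ otherwise; $\neg a$ maps to $\bot$ if $a\in A$ and to $\top$ otherwise; - $^+$ commutes with $\wedge$ and $\vee$; - $(\mathsf X\psi_1)^+(A)=\psi_1\wedge\neg\mathit{last}$, and $(\mathsf X_{\mathsf w}\psi_1)^+(A)=\psi_1\vee\mathit{last}$; - $(\psi_1\mathsf U\psi_2)^+(A)=\psi_2^+(A)\vee(\psi_1^+(A)\wedge(\mathsf X(\psi_1\mathsf U\psi_2))^+(A))$; - $(\psi_1\mathsf R\psi_2)^+(A)=\psi_2^+(A)\wedge(\psi_1^+(A)\vee(\mathsf X_{\mathsf w}(\psi_1\mathsf R\psi_2))^+(A))$. On sequences, $\psi^+(\epsilon)=\psi$ and $\psi^+(A\rho)=(\psi^+(A))^+(\rho)$. $\equiv$ is propositional equivalence, with atoms, $\mathit{last}$ and temporally-rooted subproperties treated as opaque propositions. Corresponding atom sequence. $\mathsf{seq}_\psi(\tau)=\langle A_0,\dots,A_{n-1}\rangle$, where: - $A_0=\{a\in\mathit{foa}(\psi)\mid a$ contains no lookback variable and $M,\alpha_0\models a\}$; - $A_i=\{a\in\mathit{foa}(\psi)\mid M,\alpha_{i-1}\rhd\alpha_i\models a\}$ for $0<i<n$. *)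

theory Defs
  imports Main
begin

text \<open>Data variables have type 'x (finite, hence V finite and non-empty),
 sorts 's, function symbols 'f, predicate symbols 'p, values 'v.\<close>

record ('x, 's, 'f, 'p) signature =
  var_sort  :: "'x \<Rightarrow> 's"
  fun_sig   :: "'f \<Rightarrow> 's list \<times> 's"
  pred_sig  :: "'p \<Rightarrow> 's list"

record ('s, 'f, 'p, 'v) fo_struct =
  sdom       :: "'s \<Rightarrow> 'v set"
  fun_interp :: "'f \<Rightarrow> 'v list \<Rightarrow> 'v"
  pred_interp :: "'p \<Rightarrow> 'v list set"

definition is_structure ::
  "('x, 's, 'f, 'p) signature \<Rightarrow> ('s, 'f, 'p, 'v) fo_struct \<Rightarrow> bool" where
  "is_structure \<Sigma> M \<longleftrightarrow>
     (\<forall>s. sdom M s \<noteq> {}) \<and>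
     (\<forall>f vs. list_all2 (\<lambda>v s. v \<in> sdom M s) vs (fst (fun_sig \<Sigma> f)) \<longrightarrow>
              fun_interp M f vs \<in> sdom M (snd (fun_sig \<Sigma> f))) \<and>
     (\<forall>p. pred_interp M p \<subseteq> {vs. list_all2 (\<lambda>v s. v \<in> sdom M s) vs (pred_sig \<Sigma> p)})"

definition sorted_assignment ::
  "('x, 's, 'f, 'p) signature \<Rightarrow> ('s, 'f, 'p, 'v) fo_struct \<Rightarrow> ('x \<Rightarrow> 'v) \<Rightarrow> bool" where
  "sorted_assignment \<Sigma> M \<alpha> \<longleftrightarrow> (\<forall>v. \<alpha> v \<in> sdom M (var_sort \<Sigma> v))"

text \<open>Terms: \<open>Var v\<close> is v, \<open>Prev v\<close> is the lookback variable of v.\<close>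
datatype ('x, 'f) trm = Var 'x | Prev 'x | Fn 'f "('x, 'f) trm list"

datatype ('x, 'f, 'p) atom = Atom 'p "('x, 'f) trm list"

primrec trm_sort :: "('x, 's, 'f, 'p) signature \<Rightarrow> ('x, 'f) trm \<Rightarrow> 's option" where
  "trm_sort \<Sigma> (Var v) = Some (var_sort \<Sigma> v)"
| "trm_sort \<Sigma> (Prev v) = Some (var_sort \<Sigma> v)"
| "trm_sort \<Sigma> (Fn f ts) =
     (if map (trm_sort \<Sigma>) ts = map Some (fst (fun_sig \<Sigma> f))
      then Some (snd (fun_sig \<Sigma> f)) else None)"

primrec atom_well_sorted :: "('x, 's, 'f, 'p) signature \<Rightarrow> ('x, 'f, 'p) atom \<Rightarrow> bool" where
  "atom_well_sorted \<Sigma> (Atom p ts) \<longleftrightarrow> map (trm_sort \<Sigma>) ts = map Some (pred_sig \<Sigma> p)"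

primrec trm_has_lb :: "('x, 'f) trm \<Rightarrow> bool" where
  "trm_has_lb (Var v) = False"
| "trm_has_lb (Prev v) = True"
| "trm_has_lb (Fn f ts) = list_ex id (map trm_has_lb ts)"

primrec atom_has_lb :: "('x, 'f, 'p) atom \<Rightarrow> bool" where
  "atom_has_lb (Atom p ts) = (\<exists>t \<in> set ts. trm_has_lb t)"

text \<open>Evaluation under \<open>\<beta> \<rhd> \<beta>'\<close>: lookback variables read \<beta>, current ones \<beta>'.\<close>
primrec eval_trm :: "('s, 'f, 'p, 'v) fo_struct \<Rightarrow> ('x \<Rightarrow> 'v) \<Rightarrow> ('x \<Rightarrow> 'v) \<Rightarrow> ('x, 'f) trm \<Rightarrow> 'v" where
  "eval_trm M \<beta> \<beta>' (Var v) = \<beta>' v"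
| "eval_trm M \<beta> \<beta>' (Prev v) = \<beta> v"
| "eval_trm M \<beta> \<beta>' (Fn f ts) = fun_interp M f (map (eval_trm M \<beta> \<beta>') ts)"

primrec atom_holds :: "('s, 'f, 'p, 'v) fo_struct \<Rightarrow> ('x \<Rightarrow> 'v) \<Rightarrow> ('x \<Rightarrow> 'v) \<Rightarrow> ('x, 'f, 'p) atom \<Rightarrow> bool" where
  "atom_holds M \<beta> \<beta>' (Atom p ts) \<longleftrightarrow> map (eval_trm M \<beta> \<beta>') ts \<in> pred_interp M p"

text \<open>One datatype for properties and for the outputs of xnf/progression; the
 constructors \<open>LLast\<close>/\<open>LNotLast\<close> are the dedicated proposition last and its
 negation.\<close>
datatype ('x, 'f, 'p) ltl =
    LTrue | LFalse
  | LAtom "('x, 'f, 'p) atom" | LNeg "('x, 'f, 'p) atom"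
  | LAnd "('x, 'f, 'p) ltl" "('x, 'f, 'p) ltl"
  | LOr "('x, 'f, 'p) ltl" "('x, 'f, 'p) ltl"
  | LX "('x, 'f, 'p) ltl" | LXw "('x, 'f, 'p) ltl"
  | LU "('x, 'f, 'p) ltl" "('x, 'f, 'p) ltl"
  | LR "('x, 'f, 'p) ltl" "('x, 'f, 'p) ltl"
  | LLast | LNotLast

primrec in_L :: "('x, 'f, 'p) ltl \<Rightarrow> bool" where
  "in_L LTrue = True" | "in_L LFalse = True"
| "in_L (LAtom a) = True" | "in_L (LNeg a) = True"
| "in_L (LAnd \<psi>1 \<psi>2) = (in_L \<psi>1 \<and> in_L \<psi>2)"
| "in_L (LOr \<psi>1 \<psi>2) = (in_L \<psi>1 \<and> in_L \<psi>2)"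
| "in_L (LX \<psi>) = in_L \<psi>" | "in_L (LXw \<psi>) = in_L \<psi>"
| "in_L (LU \<psi>1 \<psi>2) = (in_L \<psi>1 \<and> in_L \<psi>2)"
| "in_L (LR \<psi>1 \<psi>2) = (in_L \<psi>1 \<and> in_L \<psi>2)"
| "in_L LLast = False" | "in_L LNotLast = False"

primrec foa :: "('x, 'f, 'p) ltl \<Rightarrow> ('x, 'f, 'p) atom set" where
  "foa LTrue = {}" | "foa LFalse = {}"
| "foa (LAtom a) = {a}" | "foa (LNeg a) = {a}"
| "foa (LAnd \<psi>1 \<psi>2) = foa \<psi>1 \<union> foa \<psi>2"
| "foa (LOr \<psi>1 \<psi>2) = foa \<psi>1 \<union> foa \<psi>2"
| "foa (LX \<psi>) = foa \<psi>" | "foa (LXw \<psi>) = foa \<psi>"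
| "foa (LU \<psi>1 \<psi>2) = foa \<psi>1 \<union> foa \<psi>2"
| "foa (LR \<psi>1 \<psi>2) = foa \<psi>1 \<union> foa \<psi>2"
| "foa LLast = {}" | "foa LNotLast = {}"

definition ltl_well_sorted :: "('x, 's, 'f, 'p) signature \<Rightarrow> ('x, 'f, 'p) ltl \<Rightarrow> bool" where
  "ltl_well_sorted \<Sigma> \<psi> \<longleftrightarrow> (\<forall>a \<in> foa \<psi>. atom_well_sorted \<Sigma> a)"

type_synonym ('s, 'f, 'p, 'v, 'x) trace = "('s, 'f, 'p, 'v) fo_struct \<times> ('x \<Rightarrow> 'v) list"

definition is_trace :: "('x, 's, 'f, 'p) signature \<Rightarrow> ('s, 'f, 'p, 'v, 'x) trace \<Rightarrow> bool" where
  "is_trace \<Sigma> \<tau> \<longleftrightarrow> is_structure \<Sigma> (fst \<tau>) \<and> snd \<tau> \<noteq> [] \<and>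
     (\<forall>\<alpha> \<in> set (snd \<tau>). sorted_assignment \<Sigma> (fst \<tau>) \<alpha>)"

definition trm_wd :: "nat \<Rightarrow> nat \<Rightarrow> ('x, 'f) trm \<Rightarrow> bool" where
  "trm_wd n i t \<longleftrightarrow> (0 < i \<and> i < n) \<or> (i = 0 \<and> \<not> trm_has_lb t)"

definition atom_sat :: "('s, 'f, 'p, 'v, 'x) trace \<Rightarrow> nat \<Rightarrow> ('x, 'f, 'p) atom \<Rightarrow> bool" where
  "atom_sat \<tau> i a = (case a of Atom p ts \<Rightarrow>
     (\<exists>t \<in> set ts. \<not> trm_wd (length (snd \<tau>)) i t) \<or>
     map (eval_trm (fst \<tau>) (snd \<tau> ! (i - 1)) (snd \<tau> ! i)) ts \<in> pred_interp (fst \<tau>) p)"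

primrec sat :: "('s, 'f, 'p, 'v, 'x) trace \<Rightarrow> ('x, 'f, 'p) ltl \<Rightarrow> nat \<Rightarrow> bool" where
  "sat \<tau> LTrue i = True"
| "sat \<tau> LFalse i = False"
| "sat \<tau> (LAtom a) i = atom_sat \<tau> i a"
| "sat \<tau> (LNeg a) i = (\<not> atom_sat \<tau> i a)"
| "sat \<tau> (LAnd \<psi>1 \<psi>2) i = (sat \<tau> \<psi>1 i \<and> sat \<tau> \<psi>2 i)"
| "sat \<tau> (LOr \<psi>1 \<psi>2) i = (sat \<tau> \<psi>1 i \<or> sat \<tau> \<psi>2 i)"
| "sat \<tau> (LX \<psi>) i = (i < length (snd \<tau>) - 1 \<and> sat \<tau> \<psi> (Suc i))"
| "sat \<tau> (LXw \<psi>) i = (i = length (snd \<tau>) - 1 \<or> sat \<tau> \<psi> (Suc i))"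
| "sat \<tau> (LU \<psi>1 \<psi>2) i = (\<exists>j. i \<le> j \<and> j < length (snd \<tau>) \<and> sat \<tau> \<psi>2 j \<and>
                              (\<forall>k. i \<le> k \<and> k < j \<longrightarrow> sat \<tau> \<psi>1 k))"
| "sat \<tau> (LR \<psi>1 \<psi>2) i = ((\<forall>j. i \<le> j \<and> j < length (snd \<tau>) \<longrightarrow> sat \<tau> \<psi>2 j) \<or>
                            (\<exists>j. i \<le> j \<and> j < length (snd \<tau>) \<and> sat \<tau> \<psi>1 j \<and>
                              (\<forall>k. i \<le> k \<and> k \<le> j \<longrightarrow> sat \<tau> \<psi>2 k)))"
| "sat \<tau> LLast i = (i = length (snd \<tau>) - 1)"
| "sat \<tau> LNotLast i = (i \<noteq> length (snd \<tau>) - 1)"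

definition models :: "('s, 'f, 'p, 'v, 'x) trace \<Rightarrow> ('x, 'f, 'p) ltl \<Rightarrow> bool" where
  "models \<tau> \<psi> \<longleftrightarrow> sat \<tau> \<psi> 0"

primrec xnf :: "('x, 'f, 'p) ltl \<Rightarrow> ('x, 'f, 'p) ltl" where
  "xnf LTrue = LTrue" | "xnf LFalse = LFalse"
| "xnf (LAtom a) = LAtom a" | "xnf (LNeg a) = LNeg a"
| "xnf (LAnd \<psi>1 \<psi>2) = LAnd (xnf \<psi>1) (xnf \<psi>2)"
| "xnf (LOr \<psi>1 \<psi>2) = LOr (xnf \<psi>1) (xnf \<psi>2)"
| "xnf (LX \<psi>) = LX \<psi>" | "xnf (LXw \<psi>) = LXw \<psi>"
| "xnf (LU \<psi>1 \<psi>2) = LOr (xnf \<psi>2) (LAnd (xnf \<psi>1) (LX (LU \<psi>1 \<psi>2)))"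
| "xnf (LR \<psi>1 \<psi>2) = LAnd (LOr (xnf \<psi>2) LLast) (LOr (xnf \<psi>1) (LXw (LR \<psi>1 \<psi>2)))"
| "xnf LLast = LLast" | "xnf LNotLast = LNotLast"

primrec tnps :: "('x, 'f, 'p) ltl \<Rightarrow> ('x, 'f, 'p) ltl set" where
  "tnps LTrue = {}" | "tnps LFalse = {}"
| "tnps (LAtom a) = {LAtom a}" | "tnps (LNeg a) = {LNeg a}"
| "tnps (LAnd \<psi>1 \<psi>2) = tnps \<psi>1 \<union> tnps \<psi>2"
| "tnps (LOr \<psi>1 \<psi>2) = tnps \<psi>1 \<union> tnps \<psi>2"
| "tnps (LX \<psi>) = {LX \<psi>}" | "tnps (LXw \<psi>) = {LXw \<psi>}"
| "tnps (LU \<psi>1 \<psi>2) = {LU \<psi>1 \<psi>2}" | "tnps (LR \<psi>1 \<psi>2) = {LR \<psi>1 \<psi>2}"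
| "tnps LLast = {}" | "tnps LNotLast = {}"

definition well_formed :: "('x, 'f, 'p) ltl \<Rightarrow> bool" where
  "well_formed \<psi> \<longleftrightarrow>
     (\<forall>a. (LAtom a \<in> tnps (xnf \<psi>) \<or> LNeg a \<in> tnps (xnf \<psi>)) \<longrightarrow> \<not> atom_has_lb a)"

text \<open>The proposition last never belongs to a set of atoms A, so as a literal it
 progresses like an atom not in A. The U/R clauses inline
 \<open>(X(\<psi>1 U \<psi>2))\<^sup>+(A) = (\<psi>1 U \<psi>2) \<and> \<not>last\<close> and
 \<open>(X\<^sub>w(\<psi>1 R \<psi>2))\<^sup>+(A) = (\<psi>1 R \<psi>2) \<or> last\<close>.\<close>
primrec prog :: "('x, 'f, 'p) ltl \<Rightarrow> ('x, 'f, 'p) atom set \<Rightarrow> ('x, 'f, 'p) ltl" where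
  "prog LTrue A = LTrue" | "prog LFalse A = LFalse"
| "prog (LAtom a) A = (if a \<in> A then LTrue else LFalse)"
| "prog (LNeg a) A = (if a \<in> A then LFalse else LTrue)"
| "prog (LAnd \<psi>1 \<psi>2) A = LAnd (prog \<psi>1 A) (prog \<psi>2 A)"
| "prog (LOr \<psi>1 \<psi>2) A = LOr (prog \<psi>1 A) (prog \<psi>2 A)"
| "prog (LX \<psi>) A = LAnd \<psi> LNotLast"
| "prog (LXw \<psi>) A = LOr \<psi> LLast"
| "prog (LU \<psi>1 \<psi>2) A = LOr (prog \<psi>2 A) (LAnd (prog \<psi>1 A) (LAnd (LU \<psi>1 \<psi>2) LNotLast))"
| "prog (LR \<psi>1 \<psi>2) A = LAnd (prog \<psi>2 A) (LOr (prog \<psi>1 A) (LOr (LR \<psi>1 \<psi>2) LLast))"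
| "prog LLast A = LFalse"
| "prog LNotLast A = LTrue"

primrec prog_seq :: "('x, 'f, 'p) ltl \<Rightarrow> ('x, 'f, 'p) atom set list \<Rightarrow> ('x, 'f, 'p) ltl" where
  "prog_seq \<psi> [] = \<psi>"
| "prog_seq \<psi> (A # \<rho>) = prog_seq (prog \<psi> A) \<rho>"

text \<open>Atoms, last and temporally-rooted subformulas are opaque propositions.\<close>
primrec peval :: "(('x, 'f, 'p) atom \<Rightarrow> bool) \<Rightarrow> bool \<Rightarrow> (('x, 'f, 'p) ltl \<Rightarrow> bool)
                  \<Rightarrow> ('x, 'f, 'p) ltl \<Rightarrow> bool" where
  "peval va vl vt LTrue = True" | "peval va vl vt LFalse = False"
| "peval va vl vt (LAtom a) = va a" | "peval va vl vt (LNeg a) = (\<not> va a)"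
| "peval va vl vt (LAnd \<psi>1 \<psi>2) = (peval va vl vt \<psi>1 \<and> peval va vl vt \<psi>2)"
| "peval va vl vt (LOr \<psi>1 \<psi>2) = (peval va vl vt \<psi>1 \<or> peval va vl vt \<psi>2)"
| "peval va vl vt (LX \<psi>) = vt (LX \<psi>)" | "peval va vl vt (LXw \<psi>) = vt (LXw \<psi>)"
| "peval va vl vt (LU \<psi>1 \<psi>2) = vt (LU \<psi>1 \<psi>2)"
| "peval va vl vt (LR \<psi>1 \<psi>2) = vt (LR \<psi>1 \<psi>2)"
| "peval va vl vt LLast = vl" | "peval va vl vt LNotLast = (\<not> vl)"

definition pequiv :: "('x, 'f, 'p) ltl \<Rightarrow> ('x, 'f, 'p) ltl \<Rightarrow> bool" where
  "pequiv \<phi> \<chi> \<longleftrightarrow> (\<forall>va vl vt. peval va vl vt \<phi> = peval va vl vt \<chi>)"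

text \<open>At the end of the trace the proposition last holds (the last progression
 step was made at the last instant): replace last by true at the top level
 (temporally-rooted subformulas never contain last).\<close>
primrec close_last :: "('x, 'f, 'p) ltl \<Rightarrow> ('x, 'f, 'p) ltl" where
  "close_last LTrue = LTrue" | "close_last LFalse = LFalse"
| "close_last (LAtom a) = LAtom a" | "close_last (LNeg a) = LNeg a"
| "close_last (LAnd \<psi>1 \<psi>2) = LAnd (close_last \<psi>1) (close_last \<psi>2)"
| "close_last (LOr \<psi>1 \<psi>2) = LOr (close_last \<psi>1) (close_last \<psi>2)"
| "close_last (LX \<psi>) = LX \<psi>" | "close_last (LXw \<psi>) = LXw \<psi>"
| "close_last (LU \<psi>1 \<psi>2) = LU \<psi>1 \<psi>2" | "close_last (LR \<psi>1 \<psi>2) = LR \<psi>1 \<psi>2"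
| "close_last LLast = LTrue" | "close_last LNotLast = LFalse"

definition seq :: "('x, 'f, 'p) ltl \<Rightarrow> ('s, 'f, 'p, 'v, 'x) trace \<Rightarrow> ('x, 'f, 'p) atom set list" where
  "seq \<psi> \<tau> = map (\<lambda>i. if i = 0
        then {a \<in> foa \<psi>. \<not> atom_has_lb a \<and> atom_holds (fst \<tau>) (snd \<tau> ! 0) (snd \<tau> ! 0) a}
        else {a \<in> foa \<psi>. atom_holds (fst \<tau>) (snd \<tau> ! (i - 1)) (snd \<tau> ! i) a})
      [0..<length (snd \<tau>)]"

end

theory Submission
  imports Defs
begin

(* Both sides are compared with satisfaction of psi on the word seq_psi(tau) of atom sets.
   Well-formedness ensures that every atom evaluated at instant 0 is free of lookback
   variables, so the atom sets record exactly which atoms hold in tau, and tau |= psi is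
   satisfaction on the word. Progressing at a non-final instant i turns satisfaction at i
   into satisfaction of the progressed formula at i + 1 (the expansion laws of U and R); at
   the final instant, closing last leaves a formula whose propositional value depends on no
   opaque proposition and is satisfaction at that instant. *)

definition until_within :: "nat \<Rightarrow> (nat \<Rightarrow> bool) \<Rightarrow> (nat \<Rightarrow> bool) \<Rightarrow> nat \<Rightarrow> bool" where
  "until_within n P Q i \<longleftrightarrow> (\<exists>j. i \<le> j \<and> j < n \<and> Q j \<and> (\<forall>k. i \<le> k \<and> k < j \<longrightarrow> P k))"

definition release_within :: "nat \<Rightarrow> (nat \<Rightarrow> bool) \<Rightarrow> (nat \<Rightarrow> bool) \<Rightarrow> nat \<Rightarrow> bool" where
  "release_within n P Q i \<longleftrightarrow> (\<forall>j. i \<le> j \<and> j < n \<longrightarrow> Q j) \<or>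
     (\<exists>j. i \<le> j \<and> j < n \<and> P j \<and> (\<forall>k. i \<le> k \<and> k \<le> j \<longrightarrow> Q k))"

lemma until_within_unfold:
  assumes "Suc i < n"
  shows "until_within n P Q i \<longleftrightarrow> Q i \<or> P i \<and> until_within n P Q (Suc i)"
proof
  assume "until_within n P Q i"
  then obtain j where j: "i \<le> j" "j < n" "Q j" "\<forall>k. i \<le> k \<and> k < j \<longrightarrow> P k"
    unfolding until_within_def by blast
  show "Q i \<or> P i \<and> until_within n P Q (Suc i)"
  proof (cases "j = i")
    case False
    then have "P i" "until_within n P Q (Suc i)"
      using j unfolding until_within_def by (auto intro!: exI[of _ j])
    then show ?thesis by blast
  qed (use j in simp)
next
  assume "Q i \<or> P i \<and> until_within n P Q (Suc i)"
  then show "until_within n P Q i"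
  proof
    assume "Q i"
    then show ?thesis using assms unfolding until_within_def by auto
  next
    assume "P i \<and> until_within n P Q (Suc i)"
    then show ?thesis unfolding until_within_def by (metis Suc_le_eq nat_less_le)
  qed
qed

lemma release_within_unfold:
  assumes "Suc i < n"
  shows "release_within n P Q i \<longleftrightarrow> Q i \<and> (P i \<or> release_within n P Q (Suc i))"
proof
  assume "release_within n P Q i"
  then show "Q i \<and> (P i \<or> release_within n P Q (Suc i))"
    using assms unfolding release_within_def by (metis Suc_le_eq less_Suc_eq less_Suc_eq_le)
next
  assume r: "Q i \<and> (P i \<or> release_within n P Q (Suc i))"
  then have extend: "Q k" if "i \<le> k" "Suc i \<le> k \<Longrightarrow> Q k" for k
    using that by (cases "k = i") auto
  from r consider "P i" | "\<forall>j. Suc i \<le> j \<and> j < n \<longrightarrow> Q j"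
    | j where "Suc i \<le> j" "j < n" "P j" "\<forall>k. Suc i \<le> k \<and> k \<le> j \<longrightarrow> Q k"
    unfolding release_within_def by blast
  then show "release_within n P Q i"
  proof cases
    case 1
    then show ?thesis using r assms unfolding release_within_def by (intro disjI2 exI[of _ i]) auto
  next
    case 2
    then show ?thesis unfolding release_within_def using extend by blast
  next
    case (3 j)
    then show ?thesis unfolding release_within_def using extend
      by (intro disjI2 exI[of _ j]) (auto dest: Suc_leD)
  qed
qed

lemma until_within_cong:
  assumes "\<And>j. i \<le> j \<Longrightarrow> j < n \<Longrightarrow> P j = P' j" "\<And>j. i \<le> j \<Longrightarrow> j < n \<Longrightarrow> Q j = Q' j"
  shows "until_within n P Q i = until_within n P' Q' i"
  unfolding until_within_def using assms by (meson le_less_trans order.strict_trans)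

lemma release_within_cong:
  assumes "\<And>j. i \<le> j \<Longrightarrow> j < n \<Longrightarrow> P j = P' j" "\<And>j. i \<le> j \<Longrightarrow> j < n \<Longrightarrow> Q j = Q' j"
  shows "release_within n P Q i = release_within n P' Q' i"
  unfolding release_within_def using assms by (meson le_less_trans order.strict_trans1)

lemma until_within_last: "until_within (Suc m) P Q m \<longleftrightarrow> Q m"
  unfolding until_within_def using less_Suc_eq_le by auto

lemma release_within_last: "release_within (Suc m) P Q m \<longleftrightarrow> Q m"
  unfolding release_within_def using less_Suc_eq_le by auto

text \<open>In a progressed formula, last refers to the instant before the current one, which
  inside the word is never the final instant; so it is read as false.\<close>
primrec word_sat :: "nat \<Rightarrow> (nat \<Rightarrow> ('x, 'f, 'p) atom set) \<Rightarrow> ('x, 'f, 'p) ltl \<Rightarrow> nat \<Rightarrow> bool" where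
  "word_sat n L LTrue i = True"
| "word_sat n L LFalse i = False"
| "word_sat n L (LAtom a) i = (a \<in> L i)"
| "word_sat n L (LNeg a) i = (a \<notin> L i)"
| "word_sat n L (LAnd \<phi>1 \<phi>2) i = (word_sat n L \<phi>1 i \<and> word_sat n L \<phi>2 i)"
| "word_sat n L (LOr \<phi>1 \<phi>2) i = (word_sat n L \<phi>1 i \<or> word_sat n L \<phi>2 i)"
| "word_sat n L (LX \<phi>) i = (i < n - 1 \<and> word_sat n L \<phi> (Suc i))"
| "word_sat n L (LXw \<phi>) i = (i = n - 1 \<or> word_sat n L \<phi> (Suc i))"
| "word_sat n L (LU \<phi>1 \<phi>2) i = until_within n (word_sat n L \<phi>1) (word_sat n L \<phi>2) i"
| "word_sat n L (LR \<phi>1 \<phi>2) i = release_within n (word_sat n L \<phi>1) (word_sat n L \<phi>2) i"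
| "word_sat n L LLast i = False"
| "word_sat n L LNotLast i = True"

lemma word_sat_prog:
  assumes "Suc i < n"
  shows "word_sat n L (prog \<phi> (L i)) (Suc i) = word_sat n L \<phi> i"
  using assms by (induction \<phi>) (auto simp: until_within_unfold release_within_unfold)

lemma peval_close_last_prog:
  "peval va vl vt (close_last (prog \<phi> (L m))) = word_sat (Suc m) L \<phi> m"
  by (induction \<phi>) (auto simp: until_within_last release_within_last)

lemma peval_close_last_prog_seq_drop:
  assumes "i < length \<rho>"
  shows "peval va vl vt (close_last (prog_seq \<phi> (drop i \<rho>))) = word_sat (length \<rho>) ((!) \<rho>) \<phi> i"
  using assms
proof (induction "length \<rho> - Suc i" arbitrary: i \<phi>)
  case 0
  then have "length \<rho> = Suc i" by simp
  then have "drop i \<rho> = [\<rho> ! i]"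
    by (metis Cons_nth_drop_Suc drop_all lessI order_refl)
  then show ?case
    using peval_close_last_prog[of va vl vt \<phi> "(!) \<rho>" i] \<open>length \<rho> = Suc i\<close> by simp
next
  case (Suc k)
  have "drop i \<rho> = \<rho> ! i # drop (Suc i) \<rho>"
    using Suc.prems by (rule Cons_nth_drop_Suc[symmetric])
  then have "peval va vl vt (close_last (prog_seq \<phi> (drop i \<rho>))) =
      word_sat (length \<rho>) ((!) \<rho>) (prog \<phi> (\<rho> ! i)) (Suc i)"
    using Suc.hyps(1)[of "Suc i"] Suc.hyps(2) by simp
  also have "\<dots> = word_sat (length \<rho>) ((!) \<rho>) \<phi> i"
    using Suc.hyps(2) by (intro word_sat_prog) simp
  finally show ?case .
qed

lemma well_formed_simps:
  "well_formed (LAtom a) \<longleftrightarrow> \<not> atom_has_lb a"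
  "well_formed (LNeg a) \<longleftrightarrow> \<not> atom_has_lb a"
  "well_formed (LAnd \<phi>1 \<phi>2) \<longleftrightarrow> well_formed \<phi>1 \<and> well_formed \<phi>2"
  "well_formed (LOr \<phi>1 \<phi>2) \<longleftrightarrow> well_formed \<phi>1 \<and> well_formed \<phi>2"
  "well_formed (LU \<phi>1 \<phi>2) \<longleftrightarrow> well_formed \<phi>1 \<and> well_formed \<phi>2"
  "well_formed (LR \<phi>1 \<phi>2) \<longleftrightarrow> well_formed \<phi>1 \<and> well_formed \<phi>2"
  by (auto simp: well_formed_def)

lemma atom_sat_iff_mem_seq:
  assumes "a \<in> foa \<psi>" "i < length (snd \<tau>)" "i = 0 \<Longrightarrow> \<not> atom_has_lb a"
  shows "atom_sat \<tau> i a \<longleftrightarrow> a \<in> seq \<psi> \<tau> ! i"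
  using assms by (cases a) (auto simp: seq_def atom_sat_def trm_wd_def)

lemma sat_eq_word_sat_seq:
  assumes "in_L \<phi>" "foa \<phi> \<subseteq> foa \<psi>" "i < length (snd \<tau>)" "i = 0 \<Longrightarrow> well_formed \<phi>"
  shows "sat \<tau> \<phi> i = word_sat (length (snd \<tau>)) ((!) (seq \<psi> \<tau>)) \<phi> i"
  using assms
proof (induction \<phi> arbitrary: i)
  case (LAtom a)
  then show ?case using atom_sat_iff_mem_seq[of a \<psi> i \<tau>] by (simp add: well_formed_simps)
next
  case (LNeg a)
  then show ?case using atom_sat_iff_mem_seq[of a \<psi> i \<tau>] by (simp add: well_formed_simps)
next
  case (LXw \<phi>)
  then show ?case by (cases "i = length (snd \<tau>) - 1") auto
next
  case (LU \<phi>1 \<phi>2)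
  have "sat \<tau> (LU \<phi>1 \<phi>2) i = until_within (length (snd \<tau>)) (sat \<tau> \<phi>1) (sat \<tau> \<phi>2) i"
    by (simp add: until_within_def)
  also have "\<dots> = word_sat (length (snd \<tau>)) ((!) (seq \<psi> \<tau>)) (LU \<phi>1 \<phi>2) i"
    using LU by (auto simp: well_formed_simps intro!: until_within_cong)
  finally show ?case .
next
  case (LR \<phi>1 \<phi>2)
  have "sat \<tau> (LR \<phi>1 \<phi>2) i = release_within (length (snd \<tau>)) (sat \<tau> \<phi>1) (sat \<tau> \<phi>2) i"
    by (simp add: release_within_def)
  also have "\<dots> = word_sat (length (snd \<tau>)) ((!) (seq \<psi> \<tau>)) (LR \<phi>1 \<phi>2) i"
    using LR by (auto simp: well_formed_simps intro!: release_within_cong)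
  finally show ?case .
qed (auto simp: well_formed_simps)

theorem theorem1:
  fixes \<Sigma> :: "('x :: finite, 's, 'f, 'p) signature"
    and \<psi> :: "('x, 'f, 'p) ltl"
    and \<tau> :: "('s, 'f, 'p, 'v, 'x) trace"
  assumes "in_L \<psi>"
    and "ltl_well_sorted \<Sigma> \<psi>"
    and "well_formed \<psi>"
    and "is_trace \<Sigma> \<tau>"
  shows "pequiv (close_last (prog_seq \<psi> (seq \<psi> \<tau>))) LTrue \<longleftrightarrow> models \<tau> \<psi>"
proof -
  let ?n = "length (snd \<tau>)"
  have "0 < ?n" using assms(4) by (simp add: is_trace_def)
  moreover have "length (seq \<psi> \<tau>) = ?n" by (simp add: seq_def)
  ultimately have "peval va vl vt (close_last (prog_seq \<psi> (seq \<psi> \<tau>))) =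
      word_sat ?n ((!) (seq \<psi> \<tau>)) \<psi> 0" for va vl vt
    using peval_close_last_prog_seq_drop[of 0 "seq \<psi> \<tau>" va vl vt \<psi>] by simp
  moreover have "sat \<tau> \<psi> 0 = word_sat ?n ((!) (seq \<psi> \<tau>)) \<psi> 0"
    using sat_eq_word_sat_seq[OF assms(1) _ \<open>0 < ?n\<close>] assms(3) by simp
  ultimately show ?thesis unfolding pequiv_def models_def by simp
qed

end
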